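(* For every $\ell>0$ let $\mathscr D_\ell=\{(r,v)\in(0,\infty)\times\mathbb R: v^2-\frac mr+\frac{\ell}{r^2}>0\}$. Define $(R(\cdot,\cdot,\ell),V(\cdot,\cdot,\ell)):\mathbb R\times(0,\infty)\to\mathscr D_\ell$ by $$R(\theta,a,\ell)=p\,H_\kappa\Big(\frac{|\theta|}{p}\Big)-p\kappa,\qquad V(\theta,a,\ell)=\operatorname{sgn}(\theta)\,a\sqrt{1+\frac{m}{a^2R(\theta,a,\ell)}-\frac{\ell}{a^2R(\theta,a,\ell)^2}},$$ with $p=p(a,\ell)$, $\kappa=\kappa(a,\ell)$. Then this map is a canonical (symplectic) diffeomorphism, with inverse $(\Theta,\mathcal A):\mathscr D_\ell\to\mathbb R\times(0,\infty)$, $$\mathcal A(r,v,\ell)=\sqrt{v^2-\frac mr+\frac{\ell}{r^2}},\qquad\Theta(r,v,\ell)=\operatorname{sgn}(v)\,p(a,\ell)\,G_{\kappa(a,\ell)}\Big(\frac{r}{p(a,\ell)}+\kappa(a,\ell)\Big)\Big|_{a=\mathcal A(r,v,\ell)}.$$ Moreover, the solutions of $\dot r=v$, $\dot v=\frac{\ell}{r^3}-\frac m2\frac1{r^2}$ with $v^2-\frac mr+\frac{\ell}{r^2}>0$ are exactly the curves $t\mapsto(R(\theta+ta,a,\ell),V(\theta+ta,a,\ell))$ with parameters $(\theta,a)\in\mathbb R\times(0,\infty)$.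
   Context: Fix $m>0$. For $a,\ell>0$: $\kappa(a,\ell)=(1+4a^2\ell/m^2)^{-1/2}\in(0,1)$, $p(a,\ell)=\frac{m}{2a^2\kappa(a,\ell)}$. For $\kappa\in(0,1)$, $G_\kappa:[1,\infty)\to[0,\infty)$, $G_\kappa(x)=\sqrt{x^2-1}-\kappa\ln(x+\sqrt{x^2-1})$, and $H_\kappa=G_\kappa^{-1}:[0,\infty)\to[1,\infty)$. Canonical means that the map preserves the symplectic form, $dr\wedge dv=d\theta\wedge da$ (equivalently, Poisson brackets $\partial_rf\partial_vg-\partial_vf\partial_rg$ correspond to $\partial_\theta f\partial_ag-\partial_af\partial_\theta g$). *)

theory Defs
  imports "HOL-Analysis.Analysis"
begin

definition kappa :: "real \<Rightarrow> real \<Rightarrow> real \<Rightarrow> real" where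
  "kappa m a l = 1 / sqrt (1 + 4 * a^2 * l / m^2)"

definition pp :: "real \<Rightarrow> real \<Rightarrow> real \<Rightarrow> real" where
  "pp m a l = m / (2 * a^2 * kappa m a l)"

definition G :: "real \<Rightarrow> real \<Rightarrow> real" where
  "G k x = sqrt (x^2 - 1) - k * ln (x + sqrt (x^2 - 1))"

definition H :: "real \<Rightarrow> real \<Rightarrow> real" where
  "H k = the_inv_into {1..} (G k)"

definition Rf :: "real \<Rightarrow> real \<Rightarrow> real \<Rightarrow> real \<Rightarrow> real" where
  "Rf m l \<theta> a = pp m a l * H (kappa m a l) (\<bar>\<theta>\<bar> / pp m a l) - pp m a l * kappa m a l"

definition Vf :: "real \<Rightarrow> real \<Rightarrow> real \<Rightarrow> real \<Rightarrow> real" where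
  "Vf m l \<theta> a = sgn \<theta> * a * sqrt (1 + m / (a^2 * Rf m l \<theta> a) - l / (a^2 * (Rf m l \<theta> a)^2))"

definition Dl :: "real \<Rightarrow> real \<Rightarrow> (real \<times> real) set" where
  "Dl m l = {(r, v). r > 0 \<and> v^2 - m / r + l / r^2 > 0}"

definition Af :: "real \<Rightarrow> real \<Rightarrow> real \<Rightarrow> real \<Rightarrow> real" where
  "Af m l r v = sqrt (v^2 - m / r + l / r^2)"

definition Theta :: "real \<Rightarrow> real \<Rightarrow> real \<Rightarrow> real \<Rightarrow> real" where
  "Theta m l r v = (let a = Af m l r v in
     sgn v * pp m a l * G (kappa m a l) (r / pp m a l + kappa m a l))"

definition canon_map :: "real \<Rightarrow> real \<Rightarrow> real \<times> real \<Rightarrow> real \<times> real" where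
  "canon_map m l = (\<lambda>(\<theta>, a). (Rf m l \<theta> a, Vf m l \<theta> a))"

definition canon_inv :: "real \<Rightarrow> real \<Rightarrow> real \<times> real \<Rightarrow> real \<times> real" where
  "canon_inv m l = (\<lambda>(r, v). (Theta m l r v, Af m l r v))"

text \<open>C-infinity on an (open) set: there is a family D k hs x of iterated
  directional derivatives (D k hs x = k-th Frechet derivative at x applied to hs),
  with D 0 [] = f on S and each D k hs Frechet differentiable at every point of S
  with derivative h |-> D (k+1) (h # hs).\<close>
definition Cinf_on :: "'a::real_normed_vector set \<Rightarrow> ('a \<Rightarrow> 'b::real_normed_vector) \<Rightarrow> bool" where
  "Cinf_on S f \<longleftrightarrow> (\<exists>D :: nat \<Rightarrow> 'a list \<Rightarrow> 'a \<Rightarrow> 'b.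
      (\<forall>x\<in>S. D 0 [] x = f x) \<and>
      (\<forall>k hs x. length hs = k \<and> x \<in> S \<longrightarrow>
          (D k hs has_derivative (\<lambda>h. D (Suc k) (h # hs) x)) (at x)))"

end

(* Substituting x = cosh F turns G into the hyperbolic Kepler function: G k x = psi k (sinh F)
   with psi k w = w - k * arsinh w, a strictly increasing odd bijection of the reals for
   0 <= k < 1. So R = p (cosh F - kappa) and V = a sinh F / (cosh F - kappa), where
   theta / p = sinh F - kappa F. The constants p and kappa are chosen such that
   a^2 r^2 + m r - l = (a p)^2 ((r / p + kappa)^2 - 1); this identifies the energy
   v^2 - m / r + l / r^2 with a^2 on the image and yields the inverse (Theta, A).
   Smoothness comes from the inverse function theorem applied to (k, w) |-> (k, psi k w),
   which makes the inverse of psi smooth jointly in k and its argument. Differentiating along t |-> (theta + t a, a) shows that these curves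
   solve the radial Kepler equation; conversely, along any solution the energy is conserved and
   Theta grows at rate a. The Jacobian determinant is 1 because the theta-column of the
   Jacobian is the flow velocity divided by a, and conservation of energy fixes the pairing of
   this column with the a-column. *)

theory Submission
  imports Defs
begin

section \<open>Smooth real-valued functions\<close>

(* One directional derivative is taken at a time, and the k-th derivative need not be
   continuous; this is harmless because only smooth_on (all k at once) is used. *)
fun Ck_on :: "nat \<Rightarrow> 'a::real_normed_vector set \<Rightarrow> ('a \<Rightarrow> real) \<Rightarrow> bool" where
  "Ck_on 0 S f = True"
| "Ck_on (Suc k) S f =
     (\<exists>f'. (\<forall>x\<in>S. (f has_derivative f' x) (at x)) \<and> (\<forall>h. Ck_on k S (\<lambda>x. f' x h)))"

declare Ck_on.simps(2) [simp del]

lemma Ck_onI: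
  "(\<And>x. x \<in> S \<Longrightarrow> (f has_derivative f' x) (at x)) \<Longrightarrow> (\<And>h. Ck_on k S (\<lambda>x. f' x h))
    \<Longrightarrow> Ck_on (Suc k) S f"
  by (auto simp: Ck_on.simps(2))

lemma Ck_onE:
  assumes "Ck_on (Suc k) S f"
  obtains f' where "\<And>x. x \<in> S \<Longrightarrow> (f has_derivative f' x) (at x)" "\<And>h. Ck_on k S (\<lambda>x. f' x h)"
  using assms by (auto simp: Ck_on.simps(2))

lemma Ck_on_SucD: "Ck_on (Suc k) S f \<Longrightarrow> Ck_on k S f"
proof (induction k arbitrary: f)
  case (Suc k)
  then show ?case by (metis Ck_onE Ck_onI)
qed simp

lemma Ck_on_cong:
  assumes "open S" "\<And>x. x \<in> S \<Longrightarrow> f x = g x" "Ck_on k S f"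
  shows "Ck_on k S g"
proof (cases k)
  case (Suc j)
  with assms(3) obtain f' where "\<And>x. x \<in> S \<Longrightarrow> (f has_derivative f' x) (at x)"
    "\<And>h. Ck_on j S (\<lambda>x. f' x h)"
    by (metis Ck_onE)
  with assms(1,2) show ?thesis
    unfolding Suc by (metis Ck_onI has_derivative_transform_within_open)
qed simp

lemma Ck_on_const: "Ck_on k S (\<lambda>x. c)"
proof (induction k arbitrary: c)
  case (Suc k)
  show ?case by (rule Ck_onI[of _ _ "\<lambda>x h. 0"]) (simp_all add: Suc.IH)
qed simp

lemma Ck_on_bounded_linear: "bounded_linear f \<Longrightarrow> Ck_on k S f"
  by (cases k) (auto intro!: Ck_onI[of _ _ "\<lambda>x. f"] bounded_linear_imp_has_derivative Ck_on_const)

lemma Ck_on_fst: "Ck_on k S fst"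
  by (rule Ck_on_bounded_linear[OF bounded_linear_fst])

lemma Ck_on_snd: "Ck_on k S snd"
  by (rule Ck_on_bounded_linear[OF bounded_linear_snd])

lemma Ck_on_add: "Ck_on k S f \<Longrightarrow> Ck_on k S g \<Longrightarrow> Ck_on k S (\<lambda>x. f x + g x)"
proof (induction k arbitrary: f g)
  case (Suc k)
  obtain f' g' where
    "\<And>x. x \<in> S \<Longrightarrow> (f has_derivative f' x) (at x)" "\<And>h. Ck_on k S (\<lambda>x. f' x h)"
    "\<And>x. x \<in> S \<Longrightarrow> (g has_derivative g' x) (at x)" "\<And>h. Ck_on k S (\<lambda>x. g' x h)"
    using Suc.prems by (metis Ck_onE)
  with Suc.IH show ?case
    by (intro Ck_onI[of _ _ "\<lambda>x h. f' x h + g' x h"]) (auto intro: has_derivative_add)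
qed simp

lemma Ck_on_mult: "Ck_on k S f \<Longrightarrow> Ck_on k S g \<Longrightarrow> Ck_on k S (\<lambda>x. f x * g x)"
proof (induction k arbitrary: f g)
  case (Suc k)
  obtain f' g' where
    "\<And>x. x \<in> S \<Longrightarrow> (f has_derivative f' x) (at x)" "\<And>h. Ck_on k S (\<lambda>x. f' x h)"
    "\<And>x. x \<in> S \<Longrightarrow> (g has_derivative g' x) (at x)" "\<And>h. Ck_on k S (\<lambda>x. g' x h)"
    using Suc.prems by (metis Ck_onE)
  moreover have "Ck_on k S f" "Ck_on k S g"
    using Suc.prems by (auto intro: Ck_on_SucD)
  ultimately show ?case
    by (intro Ck_onI[of _ _ "\<lambda>x h. f x * g' x h + f' x h * g x"])
      (auto intro!: has_derivative_mult Ck_on_add Suc.IH)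
qed simp

lemma Ck_on_diff: "Ck_on k S f \<Longrightarrow> Ck_on k S g \<Longrightarrow> Ck_on k S (\<lambda>x. f x - g x)"
  using Ck_on_add[of k S f "\<lambda>x. -1 * g x"] Ck_on_mult[OF Ck_on_const, of k S g "-1"] by simp

lemma Ck_on_power: "Ck_on k S f \<Longrightarrow> Ck_on k S (\<lambda>x. f x ^ n)"
  by (induction n) (auto intro: Ck_on_mult Ck_on_const)

lemma Ck_on_compose:
  fixes g :: "real \<Rightarrow> real"
  assumes "Ck_on k T g" "Ck_on k S f" "\<And>x. x \<in> S \<Longrightarrow> f x \<in> T"
  shows "Ck_on k S (\<lambda>x. g (f x))"
  using assms
proof (induction k arbitrary: f g)
  case (Suc k)
  obtain f' g' where f': "\<And>x. x \<in> S \<Longrightarrow> (f has_derivative f' x) (at x)"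
      "\<And>h. Ck_on k S (\<lambda>x. f' x h)"
    and g': "\<And>y. y \<in> T \<Longrightarrow> (g has_derivative g' y) (at y)" "\<And>h. Ck_on k T (\<lambda>y. g' y h)"
    using Suc.prems(1,2) by (metis Ck_onE)
  have "((\<lambda>x. g (f x)) has_derivative (\<lambda>h. f' x h * g' (f x) 1)) (at x)" if "x \<in> S" for x
  proof -
    have "linear (g' (f x))"
      using g'(1) Suc.prems(3) that has_derivative_linear by blast
    then have "g' (f x) (f' x h) = f' x h * g' (f x) 1" for h
      using linear_scale[of "g' (f x)" "f' x h" 1] by simp
    with has_derivative_compose[of f "f' x" x UNIV g "g' (f x)"] f'(1) g'(1) Suc.prems(3) that
    show ?thesis by simp
  qed
  moreover have "Ck_on k S (\<lambda>x. g' (f x) 1)"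
    using Suc.IH[of "\<lambda>y. g' y 1" f] g'(2) Suc.prems(2,3) by (auto intro: Ck_on_SucD)
  ultimately show ?case
    using f'(2) by (intro Ck_onI[of _ _ "\<lambda>x h. f' x h * g' (f x) 1"]) (auto intro: Ck_on_mult)
qed simp

lemma Ck_on_compose2:
  fixes g :: "real \<times> real \<Rightarrow> real"
  assumes "Ck_on k T g" "Ck_on k S f1" "Ck_on k S f2" "\<And>x. x \<in> S \<Longrightarrow> (f1 x, f2 x) \<in> T"
  shows "Ck_on k S (\<lambda>x. g (f1 x, f2 x))"
  using assms
proof (induction k arbitrary: f1 f2 g)
  case (Suc k)
  obtain f1' f2' g' where
    f1': "\<And>x. x \<in> S \<Longrightarrow> (f1 has_derivative f1' x) (at x)" "\<And>h. Ck_on k S (\<lambda>x. f1' x h)" and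
    f2': "\<And>x. x \<in> S \<Longrightarrow> (f2 has_derivative f2' x) (at x)" "\<And>h. Ck_on k S (\<lambda>x. f2' x h)" and
    g': "\<And>y. y \<in> T \<Longrightarrow> (g has_derivative g' y) (at y)" "\<And>h. Ck_on k T (\<lambda>y. g' y h)"
    using Suc.prems(1-3) by (metis Ck_onE)
  define dg where "dg x h = f1' x h * g' (f1 x, f2 x) (1, 0) + f2' x h * g' (f1 x, f2 x) (0, 1)"
    for x h
  have "((\<lambda>x. g (f1 x, f2 x)) has_derivative dg x) (at x)" if "x \<in> S" for x
  proof -
    have lin: "linear (g' (f1 x, f2 x))"
      using g'(1) Suc.prems(4) that has_derivative_linear by blast
    have "g' (f1 x, f2 x) (f1' x h, f2' x h) = dg x h" for h
      using linear_add[OF lin, of "(f1' x h, 0)" "(0, f2' x h)"]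
        linear_scale[OF lin, of "f1' x h" "(1, 0)"] linear_scale[OF lin, of "f2' x h" "(0, 1)"]
      by (simp add: dg_def)
    with has_derivative_compose[OF has_derivative_Pair[OF f1'(1)[OF that] f2'(1)[OF that]]
        g'(1)[OF Suc.prems(4)[OF that]]]
    show ?thesis by (simp add: o_def)
  qed
  moreover have "Ck_on k S (\<lambda>x. g' (f1 x, f2 x) e)" for e
    using Suc.IH[of "\<lambda>y. g' y e" f1 f2] g'(2) Suc.prems(2-4) by (auto intro: Ck_on_SucD)
  ultimately show ?case
    using f1'(2) f2'(2) by (intro Ck_onI[of _ _ dg]) (auto simp: dg_def intro!: Ck_on_add Ck_on_mult)
qed simp

lemma Ck_on_real_derivI:
  assumes "\<And>x. x \<in> S \<Longrightarrow> (f has_real_derivative f' x) (at x)" "Ck_on k S f'"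
  shows "Ck_on (Suc k) S f"
proof (rule Ck_onI[of _ _ "\<lambda>x h. f' x * h"])
  show "(f has_derivative (\<lambda>h. f' x * h)) (at x)" if "x \<in> S" for x
    using assms(1)[OF that] by (simp add: has_field_derivative_def)
  show "Ck_on k S (\<lambda>x. f' x * h)" for h
    using Ck_on_mult[OF assms(2) Ck_on_const] .
qed

lemma Ck_on_inverse: "Ck_on k {x::real. x \<noteq> 0} inverse"
proof (induction k)
  case (Suc k)
  show ?case
  proof (rule Ck_on_real_derivI[where f' = "\<lambda>x. - (inverse x * inverse x)"])
    show "(inverse has_real_derivative - (inverse x * inverse x)) (at x)" if "x \<in> {x. x \<noteq> 0}" for x
      using DERIV_inverse[of x UNIV] that by (simp add: power2_eq_square)
    show "Ck_on k {x. x \<noteq> 0} (\<lambda>x. - (inverse x * inverse x))"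
      using Ck_on_diff[OF Ck_on_const Ck_on_mult[OF Suc.IH Suc.IH], of 0] by simp
  qed
qed simp

lemma Ck_on_divide:
  "Ck_on k S f \<Longrightarrow> Ck_on k S g \<Longrightarrow> (\<And>x. x \<in> S \<Longrightarrow> g x \<noteq> 0) \<Longrightarrow> Ck_on k S (\<lambda>x. f x / g x)"
  using Ck_on_mult[OF _ Ck_on_compose[OF Ck_on_inverse], of k S f g] by (simp add: divide_inverse)

lemma Ck_on_sqrt: "Ck_on k {0<..} sqrt"
proof (induction k)
  case (Suc k)
  have "Ck_on k {0<..} (\<lambda>x. inverse (sqrt x) / 2)"
    by (rule Ck_on_divide[OF Ck_on_compose[OF Ck_on_inverse Suc.IH] Ck_on_const]) auto
  then show ?case
    by (rule Ck_on_real_derivI[rotated]) (simp add: DERIV_real_sqrt)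
qed simp

lemma Ck_on_arsinh: "Ck_on k UNIV (arsinh :: real \<Rightarrow> real)"
proof (cases k)
  case (Suc j)
  have pos: "0 < x * x + 1" for x :: real
    by (simp add: add_nonneg_pos)
  have "Ck_on j UNIV (\<lambda>x::real. 1 / sqrt (x * x + 1))"
    by (intro Ck_on_divide Ck_on_const Ck_on_compose[OF Ck_on_sqrt] Ck_on_add Ck_on_mult
        Ck_on_bounded_linear bounded_linear_ident)
      (auto simp: pos less_imp_neq[OF pos, symmetric])
  then show ?thesis
    unfolding Suc
    by (intro Ck_on_real_derivI[where f' = "\<lambda>x. 1 / sqrt (x * x + 1)"])
      (use arsinh_real_has_field_derivative in \<open>auto simp: power2_eq_square\<close>)
qed simp

definition smooth_on :: "'a::real_normed_vector set \<Rightarrow> ('a \<Rightarrow> real) \<Rightarrow> bool" where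
  "smooth_on S f \<longleftrightarrow> (\<forall>k. Ck_on k S f)"

lemma smooth_on_has_derivative:
  assumes "open S" "smooth_on S f"
  shows "\<exists>f'. (\<forall>x\<in>S. (f has_derivative f' x) (at x)) \<and> (\<forall>h. smooth_on S (\<lambda>x. f' x h))"
proof -
  have "Ck_on (Suc k) S f" for k
    using assms(2) unfolding smooth_on_def ..
  obtain f' where f': "\<And>x. x \<in> S \<Longrightarrow> (f has_derivative f' x) (at x)"
    using Ck_onE[OF \<open>Ck_on (Suc 0) S f\<close>] by blast
  have "Ck_on k S (\<lambda>x. f' x h)" for k h
  proof -
    obtain fk where fk: "\<And>x. x \<in> S \<Longrightarrow> (f has_derivative fk x) (at x)" "\<And>e. Ck_on k S (\<lambda>x. fk x e)"
      using Ck_onE[OF \<open>Ck_on (Suc k) S f\<close>] by blast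
    have "fk x h = f' x h" if "x \<in> S" for x
      using has_derivative_unique[OF fk(1) f'] that by simp
    then show ?thesis
      by (rule Ck_on_cong[OF assms(1) _ fk(2)])
  qed
  with f' show ?thesis unfolding smooth_on_def by (intro exI[of _ f']) blast
qed

lemma Cinf_on_Pair:
  assumes "open S" "smooth_on S f" "smooth_on S g" "\<And>x. x \<in> S \<Longrightarrow> F x = (f x, g x)"
  shows "Cinf_on S F"
proof -
  \<comment> \<open>Choosing the derivative d u of every smooth u once and for all makes the iterated
    derivatives D u hs a single coherent family, as Cinf_on demands.\<close>
  have "\<forall>u. \<exists>u'. smooth_on S u \<longrightarrow>
      (\<forall>x\<in>S. (u has_derivative u' x) (at x)) \<and> (\<forall>h. smooth_on S (\<lambda>x. u' x h))"
    using smooth_on_has_derivative[OF assms(1)] by blast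
  from choice[OF this] obtain d where
    d: "\<forall>u. smooth_on S u \<longrightarrow>
      (\<forall>x\<in>S. (u has_derivative d u x) (at x)) \<and> (\<forall>h. smooth_on S (\<lambda>x. d u x h))"
    by blast
  define D where "D u hs = foldr (\<lambda>h w x. d w x h) hs u" for u hs
  have smooth_D: "smooth_on S (D u hs)" if "smooth_on S u" for u hs
  proof (induction hs)
    case Nil
    from that show ?case by (simp add: D_def)
  next
    case (Cons h hs)
    with d show ?case by (simp add: D_def)
  qed
  have D_deriv: "(D u hs has_derivative (\<lambda>h. D u (h # hs) x)) (at x)"
    if "smooth_on S u" "x \<in> S" for u hs x
    using d smooth_D[OF that(1)] that(2) by (simp add: D_def)
  show ?thesis
    unfolding Cinf_on_def
  proof (intro exI[of _ "\<lambda>k hs x. (D f hs x, D g hs x)"] conjI ballI allI impI)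
    show "(D f [] x, D g [] x) = F x" if "x \<in> S" for x
      using assms(4)[OF that] by (simp add: D_def)
    show "((\<lambda>x. (D f hs x, D g hs x)) has_derivative (\<lambda>h. (D f (h # hs) x, D g (h # hs) x))) (at x)"
      if "length hs = k \<and> x \<in> S" for k hs x
      using that by (intro has_derivative_Pair D_deriv assms(2,3)) auto
  qed
qed

lemma Cinf_on_differentiable:
  assumes "Cinf_on S F" "open S" "x \<in> S"
  shows "F differentiable (at x)"
proof -
  obtain D where D: "\<forall>x\<in>S. D 0 [] x = F x"
    "\<forall>k hs x. length hs = k \<and> x \<in> S \<longrightarrow> (D k hs has_derivative (\<lambda>h. D (Suc k) (h # hs) x)) (at x)"
    using assms(1) unfolding Cinf_on_def by blast
  then have "(D 0 [] has_derivative (\<lambda>h. D (Suc 0) [h] x)) (at x)"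
    using assms(3) by (metis list.size(3))
  from has_derivative_transform_within_open[OF this assms(2,3)] D(1)
  show ?thesis unfolding differentiable_def by auto
qed

lemma zero_deriv_imp_const_on_interval:
  fixes f :: "real \<Rightarrow> real"
  assumes "is_interval I" "\<And>t. t \<in> I \<Longrightarrow> (f has_real_derivative 0) (at t)"
  shows "\<exists>c. \<forall>t\<in>I. f t = c"
  by (rule has_field_derivative_zero_constant[OF is_interval_convex[OF assms(1)]])
    (use assms(2) in \<open>blast intro: has_field_derivative_at_within\<close>)

section \<open>Kepler's hyperbolic equation\<close>

definition psi :: "real \<Rightarrow> real \<Rightarrow> real" where
  "psi k w = w - k * arsinh w"

lemma psi_has_real_derivative: "(psi k has_real_derivative 1 - k / sqrt (w^2 + 1)) (at w)"
  unfolding psi_def by (auto intro!: derivative_eq_intros)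

lemma psi_deriv_pos: "k < 1 \<Longrightarrow> 0 < 1 - k / sqrt (w^2 + 1)"
  by (smt (verit, best) le_divide_eq_1_pos real_sqrt_ge_one zero_le_power2)

lemma strict_mono_psi: "k < 1 \<Longrightarrow> strict_mono (psi k)"
  unfolding strict_mono_def
  using DERIV_pos_imp_increasing psi_has_real_derivative psi_deriv_pos by blast

lemma psi_minus [simp]: "psi k (- w) = - psi k w"
  unfolding psi_def by simp

lemma psi_0 [simp]: "psi k 0 = 0"
  unfolding psi_def by simp

lemma psi_lower_bound:
  assumes "0 \<le> k" "0 \<le> w"
  shows "(1 - k) * w \<le> psi k w"
proof -
  have "psi k 0 - (1 - k) * 0 \<le> psi k w - (1 - k) * w"
  proof (rule DERIV_nonneg_imp_nondecreasing[OF assms(2)])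
    fix x :: real
    have "k / sqrt (x^2 + 1) \<le> k"
      using divide_left_mono[of 1 "sqrt (x^2 + 1)" k] assms(1) by (simp add: add_nonneg_pos)
    then show "\<exists>y. ((\<lambda>w. psi k w - (1 - k) * w) has_real_derivative y) (at x) \<and> 0 \<le> y"
      by (intro exI[of _ "k - k / sqrt (x^2 + 1)"])
        (auto intro!: derivative_eq_intros psi_has_real_derivative)
  qed
  then show ?thesis by simp
qed

lemma psi_surj:
  assumes "0 \<le> k" "k < 1"
  shows "\<exists>w. psi k w = s"
proof -
  have nonneg: "\<exists>w. psi k w = s" if "0 \<le> s" for s
  proof -
    have "s \<le> psi k (s / (1 - k))"
      using psi_lower_bound[of k "s / (1 - k)"] assms that by simp
    moreover have "continuous_on {0..s / (1 - k)} (psi k)"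
      unfolding psi_def by (intro continuous_intros)
    ultimately show ?thesis
      using IVT'[of "psi k" 0 s "s / (1 - k)"] assms that by auto
  qed
  show ?thesis
  proof (cases "0 \<le> s")
    case False
    then obtain w where "psi k w = - s"
      using nonneg[of "- s"] by auto
    then have "psi k (- w) = s"
      by simp
    then show ?thesis ..
  qed (rule nonneg)
qed

definition psi_inv :: "real \<Rightarrow> real \<Rightarrow> real" where
  "psi_inv k s = (THE w. psi k w = s)"

lemma psi_inv_eq: "k < 1 \<Longrightarrow> psi k w = s \<Longrightarrow> psi_inv k s = w"
  unfolding psi_inv_def by (rule the_equality) (auto dest: strict_mono_eq[OF strict_mono_psi])

lemma psi_psi_inv: "0 \<le> k \<Longrightarrow> k < 1 \<Longrightarrow> psi k (psi_inv k s) = s"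
  using psi_surj psi_inv_eq by metis

lemma psi_inv_psi: "k < 1 \<Longrightarrow> psi_inv k (psi k w) = w"
  by (rule psi_inv_eq) auto

lemma psi_inv_minus: "0 \<le> k \<Longrightarrow> k < 1 \<Longrightarrow> psi_inv k (- s) = - psi_inv k s"
  by (rule psi_inv_eq) (simp_all add: psi_psi_inv)

lemma sgn_psi_inv: "0 \<le> k \<Longrightarrow> k < 1 \<Longrightarrow> sgn (psi_inv k s) = sgn s"
  using strict_mono_less[OF strict_mono_psi, of k 0 "psi_inv k s"]
    strict_mono_less[OF strict_mono_psi, of k "psi_inv k s" 0]
  by (auto simp: psi_psi_inv sgn_if)

lemma psi_inv_abs: "0 \<le> k \<Longrightarrow> k < 1 \<Longrightarrow> psi_inv k \<bar>s\<bar> = \<bar>psi_inv k s\<bar>"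
  using sgn_psi_inv[of k s] psi_inv_minus[of k s]
  by (cases "0 \<le> s") (auto simp: sgn_if split: if_splits)

lemma psi_inv_has_derivative:
  assumes "z \<in> {0<..<1} \<times> UNIV"
  defines "w \<equiv> psi_inv (fst z) (snd z)"
  shows "((\<lambda>z. psi_inv (fst z) (snd z)) has_derivative
      (\<lambda>h. (snd h + fst h * arsinh w) / (1 - fst z / sqrt (w^2 + 1)))) (at z)"
proof -
  obtain k s where z: "z = (k, s)" and k: "0 < k" "k < 1"
    using assms(1) by auto
  define d where "d = 1 - k / sqrt (w^2 + 1)"
  have "0 < d" unfolding d_def using psi_deriv_pos k by simp
  define F where "F z = (fst z, psi (fst z) (snd z))" for z :: "real \<times> real"
  have deriv: "(F has_derivative (\<lambda>h. (fst h, snd h * d - fst h * arsinh w))) (at (k, w))"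
    unfolding F_def psi_def d_def
    by (auto intro!: derivative_eq_intros arsinh_real_has_field_derivative[THEN DERIV_compose_FDERIV]
        simp: algebra_simps)
  have cont: "continuous_on ({0<..<1} \<times> UNIV) F"
    unfolding F_def psi_def
    by (intro continuous_intros continuous_on_compose2[OF continuous_on_arsinh[of UNIV]]) auto
  have "((\<lambda>z. (fst z, psi_inv (fst z) (snd z))) has_derivative
      (\<lambda>h. (fst h, (snd h + fst h * arsinh w) / d))) (at (F (k, w)))"
  proof (rule has_derivative_inverse_strong[OF _ _ cont _ deriv])
    show "open ({0<..<1::real} \<times> (UNIV :: real set))"
      by (intro open_Times open_greaterThanLessThan open_UNIV)
    show "(\<lambda>h. (fst h, snd h * d - fst h * arsinh w)) \<circ> (\<lambda>h. (fst h, (snd h + fst h * arsinh w) / d)) = id"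
      using \<open>0 < d\<close> by (auto simp: fun_eq_iff)
  qed (use k psi_inv_psi in \<open>auto simp: F_def\<close>)
  moreover have "F (k, w) = z"
    using k by (simp add: F_def w_def z psi_psi_inv)
  ultimately have "((\<lambda>z. psi_inv (fst z) (snd z)) has_derivative
      (\<lambda>h. (snd h + fst h * arsinh w) / d)) (at z)"
    using has_derivative_snd by fastforce
  then show ?thesis
    by (simp add: d_def z)
qed

lemma Ck_on_psi_inv: "Ck_on n ({0<..<1} \<times> UNIV) (\<lambda>z. psi_inv (fst z) (snd z))"
proof (induction n)
  case (Suc n)
  let ?w = "\<lambda>z. psi_inv (fst z) (snd z)"
  have sqrt: "Ck_on n ({0<..<1} \<times> UNIV) (\<lambda>z. sqrt ((?w z)^2 + 1))"
    by (intro Ck_on_compose[OF Ck_on_sqrt] Ck_on_add Ck_on_power Ck_on_const Suc.IH)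
      (simp add: add_nonneg_pos)
  have "Ck_on n ({0<..<1} \<times> UNIV) (\<lambda>z. (snd h + fst h * arsinh (?w z)) / (1 - fst z / sqrt ((?w z)^2 + 1)))"
    for h
  proof (rule Ck_on_divide)
    show "Ck_on n ({0<..<1} \<times> UNIV) (\<lambda>z. snd h + fst h * arsinh (?w z))"
      by (intro Ck_on_add Ck_on_mult Ck_on_const Ck_on_compose[OF Ck_on_arsinh Suc.IH]) simp
    show "Ck_on n ({0<..<1} \<times> UNIV) (\<lambda>z. 1 - fst z / sqrt ((?w z)^2 + 1))"
      by (intro Ck_on_diff Ck_on_const Ck_on_divide[OF Ck_on_fst sqrt])
        (simp add: add_nonneg_pos neq_iff)
    show "1 - fst z / sqrt ((?w z)^2 + 1) \<noteq> 0" if "z \<in> {0<..<1} \<times> UNIV" for z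
      using psi_deriv_pos[of "fst z" "?w z"] that by auto
  qed
  then show ?case
    using Ck_onI[OF psi_inv_has_derivative] by blast
qed simp

lemma Ck_on_psi_inv_compose:
  assumes "Ck_on n S f" "Ck_on n S g" "\<And>x. x \<in> S \<Longrightarrow> 0 < f x \<and> f x < 1"
  shows "Ck_on n S (\<lambda>x. psi_inv (f x) (g x))"
  using Ck_on_compose2[OF Ck_on_psi_inv assms(1,2)] assms(3) by simp

lemma G_eq_psi: "1 \<le> x \<Longrightarrow> G k x = psi k (sqrt (x^2 - 1))"
  unfolding G_def psi_def arsinh_real_def by (simp add: add.commute)

lemma inj_on_G: "k < 1 \<Longrightarrow> inj_on (G k) {1..}"
proof (rule inj_onI)
  fix x y
  assume "k < 1" "x \<in> {1..}" "y \<in> {1..}" "G k x = G k y"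
  then have "sqrt (x^2 - 1) = sqrt (y^2 - 1)"
    using strict_mono_eq[OF strict_mono_psi] by (simp add: G_eq_psi)
  with \<open>x \<in> {1..}\<close> \<open>y \<in> {1..}\<close> show "x = y"
    by (simp add: one_le_power power2_eq_iff_nonneg)
qed

lemma H_eq_sqrt_psi_inv:
  assumes "0 \<le> k" "k < 1" "0 \<le> s"
  shows "H k s = sqrt (1 + (psi_inv k s)^2)"
  unfolding H_def
proof (rule the_inv_into_f_eq[OF inj_on_G[OF assms(2)]])
  have "0 \<le> psi_inv k s"
    using sgn_psi_inv[OF assms(1,2), of s] assms(3) by (auto simp: sgn_if split: if_splits)
  then show "G k (sqrt (1 + (psi_inv k s)^2)) = s"
    by (simp add: G_eq_psi psi_psi_inv assms(1,2))
qed simp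

section \<open>The canonical map and its inverse\<close>

locale radial_kepler =
  fixes m l :: real
  assumes m_pos: "0 < m" and l_pos: "0 < l"
begin

abbreviation \<kappa> :: "real \<Rightarrow> real" where "\<kappa> a \<equiv> kappa m a l"
abbreviation p :: "real \<Rightarrow> real" where "p a \<equiv> pp m a l"
abbreviation energy :: "real \<Rightarrow> real \<Rightarrow> real" where "energy r v \<equiv> v^2 - m / r + l / r^2"
abbreviation force :: "real \<Rightarrow> real" where "force r \<equiv> l / r^3 - m / 2 * (1 / r^2)"

lemma kappa_radicand_pos: "0 < 1 + 4 * a^2 * l / m^2"
  using l_pos by (simp add: add_pos_nonneg)

lemma kappa_pos: "0 < \<kappa> a"
  using kappa_radicand_pos[of a] by (simp add: kappa_def)

lemma kappa_less_1:
  assumes "0 < a"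
  shows "\<kappa> a < 1"
proof -
  have "0 < 4 * a^2 * l / m^2"
    using assms l_pos m_pos by simp
  then show ?thesis
    by (simp add: kappa_def)
qed

lemma pp_pos: "0 < a \<Longrightarrow> 0 < p a"
  using kappa_pos m_pos by (simp add: pp_def)

lemma pp_kappa: "0 < a \<Longrightarrow> a^2 * p a * \<kappa> a = m / 2"
  using kappa_pos[of a] by (simp add: pp_def)

lemma pp_kappa_sq: "0 < a \<Longrightarrow> a^2 * (p a)^2 * (1 - (\<kappa> a)^2) = l"
proof -
  assume "0 < a"
  have "(\<kappa> a)^2 * (1 + 4 * a^2 * l / m^2) = 1"
    using kappa_radicand_pos[of a] by (simp add: kappa_def power_divide)
  then have "1 - (\<kappa> a)^2 = (\<kappa> a)^2 * (4 * a^2 * l / m^2)"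
    by (simp add: algebra_simps)
  then show ?thesis
    using \<open>0 < a\<close> m_pos kappa_pos[of a] by (simp add: pp_def power_divide power_mult_distrib)
qed

lemma square_completion:
  assumes "0 < a"
  shows "a^2 * r^2 + m * r - l = (a * p a)^2 * ((r / p a + \<kappa> a)^2 - 1)"
proof -
  have "(a * p a)^2 * ((r / p a + \<kappa> a)^2 - 1)
      = a^2 * r^2 + 2 * r * (a^2 * p a * \<kappa> a) - a^2 * (p a)^2 * (1 - (\<kappa> a)^2)"
    using pp_pos[OF assms] by (simp add: field_simps power2_eq_square)
  then show ?thesis
    by (simp add: pp_kappa[OF assms] pp_kappa_sq[OF assms])
qed

lemma kappa_less_sqrt:
  assumes "0 < a"
  shows "\<kappa> a < sqrt (1 + w^2)"
proof -
  have "1 \<le> sqrt (1 + w^2)"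
    by simp
  with kappa_less_1[OF assms] show ?thesis
    by linarith
qed

(* sinh F, where theta / p a = sinh F - kappa a * F defines the hyperbolic anomaly F. *)
definition sinh_anomaly :: "real \<Rightarrow> real \<Rightarrow> real" where
  "sinh_anomaly \<theta> a = psi_inv (\<kappa> a) (\<theta> / p a)"

lemma sgn_sinh_anomaly: "0 < a \<Longrightarrow> sgn (sinh_anomaly \<theta> a) = sgn \<theta>"
  using sgn_psi_inv[of "\<kappa> a" "\<theta> / p a"] kappa_pos[of a] kappa_less_1[of a] pp_pos[of a]
  by (simp add: sinh_anomaly_def sgn_divide)

lemma Rf_eq:
  assumes "0 < a"
  shows "Rf m l \<theta> a = p a * (sqrt (1 + (sinh_anomaly \<theta> a)^2) - \<kappa> a)"
proof -
  have "\<bar>\<theta>\<bar> / p a = \<bar>\<theta> / p a\<bar>"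
    using pp_pos[OF assms] by simp
  then have "H (\<kappa> a) (\<bar>\<theta>\<bar> / p a) = sqrt (1 + (sinh_anomaly \<theta> a)^2)"
    using H_eq_sqrt_psi_inv[of "\<kappa> a" "\<bar>\<theta>\<bar> / p a"] psi_inv_abs[of "\<kappa> a" "\<theta> / p a"]
      kappa_pos[of a] kappa_less_1[OF assms] pp_pos[OF assms]
    by (simp add: sinh_anomaly_def)
  then show ?thesis
    by (simp add: Rf_def right_diff_distrib)
qed

lemma Rf_pos: "0 < a \<Longrightarrow> 0 < Rf m l \<theta> a"
  using Rf_eq pp_pos kappa_less_sqrt by simp

lemma Vf_radicand:
  fixes \<theta> a :: real
  assumes "0 < a"
  defines "W \<equiv> sinh_anomaly \<theta> a"
  shows "1 + m / (a^2 * Rf m l \<theta> a) - l / (a^2 * (Rf m l \<theta> a)^2) = (W / (sqrt (1 + W^2) - \<kappa> a))^2"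
proof -
  define R where "R = Rf m l \<theta> a"
  have R: "R = p a * (sqrt (1 + W^2) - \<kappa> a)"
    unfolding R_def W_def using Rf_eq[OF \<open>0 < a\<close>] .
  have "0 < R"
    unfolding R_def using Rf_pos[OF \<open>0 < a\<close>] .
  then have "1 + m / (a^2 * R) - l / (a^2 * R^2) = (a^2 * R^2 + m * R - l) / (a^2 * R^2)"
    using \<open>0 < a\<close> by (simp add: field_simps power2_eq_square)
  also have "a^2 * R^2 + m * R - l = (a * p a * W)^2"
  proof -
    have "R / p a + \<kappa> a = sqrt (1 + W^2)"
      using R pp_pos[OF \<open>0 < a\<close>] by simp
    then show ?thesis
      by (simp add: square_completion[OF \<open>0 < a\<close>] power_mult_distrib)
  qed
  also have "(a * p a * W)^2 / (a^2 * R^2) = (W / (sqrt (1 + W^2) - \<kappa> a))^2"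
    using R \<open>0 < a\<close> pp_pos[OF \<open>0 < a\<close>] by (simp add: power_mult_distrib power_divide)
  finally show ?thesis
    unfolding R_def .
qed

lemma Vf_eq:
  fixes \<theta> a :: real
  assumes "0 < a"
  defines "W \<equiv> sinh_anomaly \<theta> a"
  shows "Vf m l \<theta> a = a * W / (sqrt (1 + W^2) - \<kappa> a)"
proof -
  have "sgn \<theta> * \<bar>W\<bar> = W"
    using sgn_sinh_anomaly[OF \<open>0 < a\<close>] unfolding W_def by (metis sgn_mult_abs)
  with kappa_less_sqrt[OF \<open>0 < a\<close>, of W] show ?thesis
    by (simp add: Vf_def Vf_radicand[OF \<open>0 < a\<close>] W_def[symmetric])
qed

lemma energy_canon_map:
  assumes "0 < a"
  shows "energy (Rf m l \<theta> a) (Vf m l \<theta> a) = a^2"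
proof -
  have "(Vf m l \<theta> a)^2 = a^2 * (1 + m / (a^2 * Rf m l \<theta> a) - l / (a^2 * (Rf m l \<theta> a)^2))"
    by (simp add: Vf_eq[OF assms] Vf_radicand[OF assms] power_mult_distrib power_divide)
  also have "\<dots> = a^2 + m / Rf m l \<theta> a - l / (Rf m l \<theta> a)^2"
    using assms by (simp add: field_simps)
  finally show ?thesis
    by simp
qed

lemma Af_pos: "(r, v) \<in> Dl m l \<Longrightarrow> 0 < Af m l r v"
  by (simp add: Dl_def Af_def)

lemma Dl_cosh_anomaly:
  assumes "(r, v) \<in> Dl m l"
  defines "A \<equiv> Af m l r v"
  shows "sqrt (1 + (v * r / (p A * A))^2) = r / p A + \<kappa> A"
proof -
  have "0 < r" "0 < A"
    using assms Af_pos by (auto simp: Dl_def)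
  have "A^2 = energy r v"
    using assms by (simp add: Dl_def Af_def)
  then have "A^2 * r^2 + m * r - l = (v * r)^2"
    using \<open>0 < r\<close> by (simp add: field_simps power2_eq_square)
  then have "(A * p A)^2 * ((r / p A + \<kappa> A)^2 - 1) = (v * r)^2"
    by (simp only: square_completion[OF \<open>0 < A\<close>])
  then have "(r / p A + \<kappa> A)^2 = 1 + (v * r / (p A * A))^2"
    using \<open>0 < A\<close> pp_pos[OF \<open>0 < A\<close>] by (simp add: field_simps power2_eq_square)
  moreover have "0 < r / p A + \<kappa> A"
    using \<open>0 < r\<close> pp_pos[OF \<open>0 < A\<close>] kappa_pos[of A] by (simp add: add_pos_pos)
  ultimately show ?thesis
    by (simp add: real_sqrt_unique)
qed

lemma Theta_eq:
  assumes "(r, v) \<in> Dl m l"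
  defines "A \<equiv> Af m l r v"
  shows "Theta m l r v = p A * psi (\<kappa> A) (v * r / (p A * A))"
proof -
  define w where "w = v * r / (p A * A)"
  have "0 < r" "0 < A"
    using assms Af_pos by (auto simp: Dl_def)
  have "r / p A + \<kappa> A = sqrt (1 + w^2)"
    using Dl_cosh_anomaly[OF assms(1)] unfolding w_def A_def by simp
  then have "G (\<kappa> A) (r / p A + \<kappa> A) = psi (\<kappa> A) \<bar>w\<bar>"
    by (simp add: G_eq_psi)
  moreover have "sgn v * psi (\<kappa> A) \<bar>w\<bar> = psi (\<kappa> A) w"
  proof -
    have "sgn w = sgn v"
      using \<open>0 < r\<close> \<open>0 < A\<close> pp_pos[OF \<open>0 < A\<close>] by (simp add: w_def sgn_mult sgn_divide)
    then show ?thesis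
      by (cases "0 \<le> w") (auto simp: sgn_if split: if_splits)
  qed
  ultimately show ?thesis
    by (simp add: Theta_def A_def[symmetric] w_def[symmetric])
qed

lemma canon_map_in_Dl: "0 < a \<Longrightarrow> canon_map m l (\<theta>, a) \<in> Dl m l"
  using energy_canon_map Rf_pos by (simp add: canon_map_def Dl_def)

lemma canon_inv_canon_map:
  assumes "0 < a"
  shows "canon_inv m l (canon_map m l (\<theta>, a)) = (\<theta>, a)"
proof -
  define R V W where "R = Rf m l \<theta> a" "V = Vf m l \<theta> a" "W = sinh_anomaly \<theta> a"
  have A: "Af m l R V = a"
    using energy_canon_map[OF assms] assms by (simp add: Af_def R_V_W_def)
  have "V * R = a * W * p a"
    using Rf_eq[OF assms] Vf_eq[OF assms] kappa_less_sqrt[OF assms, of W] by (simp add: R_V_W_def)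
  then have "V * R / (p a * a) = W"
    using assms pp_pos[OF assms] by simp
  then have "Theta m l R V = p a * psi (\<kappa> a) W"
    using Theta_eq[of R V] canon_map_in_Dl[OF assms, of \<theta>] A by (simp add: canon_map_def R_V_W_def)
  also have "\<dots> = \<theta>"
    using psi_psi_inv kappa_pos[of a] kappa_less_1[OF assms] pp_pos[OF assms]
    by (simp add: R_V_W_def sinh_anomaly_def less_imp_le)
  finally show ?thesis
    using A by (simp add: canon_map_def canon_inv_def R_V_W_def)
qed

lemma canon_inv_in_domain: "z \<in> Dl m l \<Longrightarrow> canon_inv m l z \<in> UNIV \<times> {0<..}"
  using Af_pos by (cases z) (auto simp: canon_inv_def)

lemma canon_map_canon_inv:
  assumes "z \<in> Dl m l"
  shows "canon_map m l (canon_inv m l z) = z"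
proof -
  obtain r v where z: "z = (r, v)"
    by fastforce
  define A where "A = Af m l r v"
  define w where "w = v * r / (p A * A)"
  have "0 < r" "0 < A"
    using assms Af_pos by (auto simp: Dl_def z A_def)
  have x: "sqrt (1 + w^2) = r / p A + \<kappa> A"
    using Dl_cosh_anomaly assms by (simp add: z A_def w_def)
  have W: "sinh_anomaly (Theta m l r v) A = w"
    using Theta_eq assms psi_inv_psi kappa_less_1[OF \<open>0 < A\<close>] pp_pos[OF \<open>0 < A\<close>]
    by (simp add: sinh_anomaly_def z A_def w_def)
  have "Rf m l (Theta m l r v) A = r"
    using Rf_eq[OF \<open>0 < A\<close>] W x pp_pos[OF \<open>0 < A\<close>] by simp
  moreover have "Vf m l (Theta m l r v) A = v"
    using Vf_eq[OF \<open>0 < A\<close>] W x \<open>0 < r\<close> \<open>0 < A\<close> pp_pos[OF \<open>0 < A\<close>] by (simp add: w_def)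
  ultimately show ?thesis
    by (simp add: canon_map_def canon_inv_def z A_def)
qed

lemma bij_betw_canon_map: "bij_betw (canon_map m l) (UNIV \<times> {0<..}) (Dl m l)"
proof (rule bij_betw_byWitness[where f' = "canon_inv m l"])
  show "\<forall>x\<in>UNIV \<times> {0<..}. canon_inv m l (canon_map m l x) = x"
    using canon_inv_canon_map by auto
  show "\<forall>z\<in>Dl m l. canon_map m l (canon_inv m l z) = z"
    using canon_map_canon_inv by blast
  show "canon_map m l ` (UNIV \<times> {0<..}) \<subseteq> Dl m l"
    using canon_map_in_Dl by auto
  show "canon_inv m l ` Dl m l \<subseteq> UNIV \<times> {0<..}"
    using canon_inv_in_domain by blast
qed

lemma Ck_on_kappa: "Ck_on k S f \<Longrightarrow> Ck_on k S (\<lambda>x. \<kappa> (f x))"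
  unfolding kappa_def
  by (intro Ck_on_divide Ck_on_const Ck_on_compose[OF Ck_on_sqrt] Ck_on_add Ck_on_mult Ck_on_power)
    (use kappa_radicand_pos m_pos in \<open>auto simp: neq_iff\<close>)

lemma Ck_on_pp: "Ck_on k S f \<Longrightarrow> (\<And>x. x \<in> S \<Longrightarrow> f x \<noteq> 0) \<Longrightarrow> Ck_on k S (\<lambda>x. p (f x))"
  unfolding pp_def
  by (intro Ck_on_divide Ck_on_const Ck_on_mult Ck_on_power Ck_on_kappa)
    (use kappa_pos in \<open>auto simp: less_imp_neq[symmetric]\<close>)

lemma Cinf_on_canon_map: "Cinf_on (UNIV \<times> {0<..}) (canon_map m l)"
proof -
  let ?S = "UNIV \<times> {0<..} :: (real \<times> real) set"
  have pos: "0 < snd z" if "z \<in> ?S" for z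
    using that by auto
  have p: "Ck_on k ?S (\<lambda>z. p (snd z))" for k
    using pos by (intro Ck_on_pp Ck_on_snd) auto
  have \<kappa>: "Ck_on k ?S (\<lambda>z. \<kappa> (snd z))" for k
    by (intro Ck_on_kappa Ck_on_snd)
  have W: "Ck_on k ?S (\<lambda>z. sinh_anomaly (fst z) (snd z))" for k
    unfolding sinh_anomaly_def
    by (intro Ck_on_psi_inv_compose \<kappa> Ck_on_divide[OF Ck_on_fst p])
      (use pos pp_pos kappa_pos kappa_less_1 in \<open>auto simp: less_imp_neq[symmetric]\<close>)
  have X: "Ck_on k ?S (\<lambda>z. sqrt (1 + (sinh_anomaly (fst z) (snd z))^2))" for k
    by (intro Ck_on_compose[OF Ck_on_sqrt] Ck_on_add Ck_on_const Ck_on_power W) (simp add: add_pos_nonneg)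
  show ?thesis
  proof (rule Cinf_on_Pair)
    show "open ?S"
      by (intro open_Times open_UNIV open_greaterThan)
    show "smooth_on ?S (\<lambda>z. p (snd z) * (sqrt (1 + (sinh_anomaly (fst z) (snd z))^2) - \<kappa> (snd z)))"
      unfolding smooth_on_def by (intro allI Ck_on_mult Ck_on_diff p X \<kappa>)
    show "smooth_on ?S (\<lambda>z. snd z * sinh_anomaly (fst z) (snd z) /
        (sqrt (1 + (sinh_anomaly (fst z) (snd z))^2) - \<kappa> (snd z)))"
      unfolding smooth_on_def
      by (intro allI Ck_on_divide Ck_on_mult Ck_on_diff Ck_on_snd W X \<kappa>)
        (use pos kappa_less_sqrt in \<open>auto simp: less_imp_neq[symmetric]\<close>)
  qed (use pos Rf_eq Vf_eq in \<open>auto simp: canon_map_def\<close>)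
qed

lemma open_Dl: "open (Dl m l)"
proof -
  have "Dl m l = ({0<..} \<times> UNIV) \<inter> (\<lambda>z. energy (fst z) (snd z)) -` {0<..}"
    by (auto simp: Dl_def)
  moreover have "continuous_on ({0<..} \<times> UNIV) (\<lambda>z. energy (fst z) (snd z))"
    by (intro continuous_intros) auto
  ultimately show ?thesis
    by (simp add: continuous_open_preimage open_Times)
qed

lemma Cinf_on_canon_inv: "Cinf_on (Dl m l) (canon_inv m l)"
proof -
  have pos: "0 < fst z" "0 < Af m l (fst z) (snd z)" if "z \<in> Dl m l" for z
    using that Af_pos[of "fst z" "snd z"] by (auto simp: Dl_def)
  have A: "Ck_on k (Dl m l) (\<lambda>z. Af m l (fst z) (snd z))" for k
    unfolding Af_def
    by (intro Ck_on_compose[OF Ck_on_sqrt] Ck_on_add Ck_on_diff Ck_on_divide Ck_on_power Ck_on_const Ck_on_fst Ck_on_snd)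
      (auto simp: Dl_def)
  have p: "Ck_on k (Dl m l) (\<lambda>z. p (Af m l (fst z) (snd z)))" for k
    using pos(2) by (intro Ck_on_pp A) force
  show ?thesis
  proof (rule Cinf_on_Pair[OF open_Dl])
    show "smooth_on (Dl m l) (\<lambda>z. p (Af m l (fst z) (snd z)) * psi (\<kappa> (Af m l (fst z) (snd z)))
        (snd z * fst z / (p (Af m l (fst z) (snd z)) * Af m l (fst z) (snd z))))"
      unfolding smooth_on_def psi_def
      by (intro allI Ck_on_mult Ck_on_diff Ck_on_divide Ck_on_compose[OF Ck_on_arsinh] Ck_on_kappa p A Ck_on_fst Ck_on_snd)
        (use pos pp_pos in \<open>auto simp: less_imp_neq[symmetric]\<close>)
    show "smooth_on (Dl m l) (\<lambda>z. Af m l (fst z) (snd z))"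
      unfolding smooth_on_def using A by blast
  qed (use Theta_eq in \<open>auto simp: canon_inv_def\<close>)
qed

subsection \<open>The flow\<close>

lemma sinh_anomaly_flow_deriv:
  fixes \<theta> a t :: real
  assumes "0 < a"
  defines "X \<equiv> sqrt (1 + (sinh_anomaly (\<theta> + t * a) a)^2)"
  shows "((\<lambda>s. sinh_anomaly (\<theta> + s * a) a) has_real_derivative a * X / (p a * (X - \<kappa> a))) (at t)"
proof -
  have z: "(\<kappa> a, (\<theta> + t * a) / p a) \<in> {0<..<1} \<times> UNIV"
    using kappa_pos kappa_less_1[OF \<open>0 < a\<close>] by simp
  have "((\<lambda>s. (\<kappa> a, (\<theta> + s * a) / p a)) has_derivative (\<lambda>h. (0, h * a / p a))) (at t)"
    using pp_pos[OF \<open>0 < a\<close>] by (auto intro!: derivative_eq_intros)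
  from has_derivative_compose[OF this psi_inv_has_derivative[OF z]]
  have deriv: "((\<lambda>s. sinh_anomaly (\<theta> + s * a) a) has_derivative
      (\<lambda>h. h * a / p a / (1 - \<kappa> a / X))) (at t)"
    by (simp add: o_def sinh_anomaly_def X_def add.commute)
  have c: "a / p a / (1 - \<kappa> a / X) = a * X / (p a * (X - \<kappa> a))"
  proof -
    have "\<kappa> a < X"
      unfolding X_def by (rule kappa_less_sqrt[OF \<open>0 < a\<close>])
    with kappa_pos[of a] pp_pos[OF \<open>0 < a\<close>] show ?thesis
      by (simp add: field_simps)
  qed
  show ?thesis
    unfolding has_field_derivative_def
    by (rule has_derivative_eq_rhs[OF deriv]) (simp add: fun_eq_iff c[symmetric])
qed

lemma cosh_anomaly_flow_deriv:
  fixes \<theta> a t :: real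
  assumes "0 < a"
  defines "W \<equiv> sinh_anomaly (\<theta> + t * a) a"
  shows "((\<lambda>s. sqrt (1 + (sinh_anomaly (\<theta> + s * a) a)^2)) has_real_derivative
    a * W / (p a * (sqrt (1 + W^2) - \<kappa> a))) (at t)"
proof -
  define w where "w = (\<lambda>s. sinh_anomaly (\<theta> + s * a) a)"
  define X where "X = sqrt (1 + (w t)^2)"
  have "\<kappa> a < X"
    unfolding X_def by (rule kappa_less_sqrt[OF assms(1)])
  then have "0 < X"
    using kappa_pos[of a] by linarith
  have "0 < 1 + (w t)^2"
    by (simp add: add_pos_nonneg)
  moreover have "(w has_real_derivative a * X / (p a * (X - \<kappa> a))) (at t)"
    unfolding w_def X_def by (rule sinh_anomaly_flow_deriv[OF assms(1)])
  ultimately have "((\<lambda>s. sqrt (1 + (w s)^2)) has_real_derivative a * w t / (p a * (X - \<kappa> a))) (at t)"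
    using \<open>0 < X\<close> by (auto intro!: derivative_eq_intros simp: X_def[symmetric] field_simps)
  then show ?thesis
    unfolding X_def w_def W_def .
qed

lemma Rf_flow_deriv:
  assumes "0 < a"
  shows "((\<lambda>s. Rf m l (\<theta> + s * a) a) has_real_derivative Vf m l (\<theta> + t * a) a) (at t)"
proof -
  have "((\<lambda>s. p a * (sqrt (1 + (sinh_anomaly (\<theta> + s * a) a)^2) - \<kappa> a)) has_real_derivative
      p a * (a * sinh_anomaly (\<theta> + t * a) a /
        (p a * (sqrt (1 + (sinh_anomaly (\<theta> + t * a) a)^2) - \<kappa> a)) - 0)) (at t)"
    by (intro DERIV_cmult DERIV_diff cosh_anomaly_flow_deriv[OF assms] DERIV_const)
  then show ?thesis
    using Rf_eq[OF assms] Vf_eq[OF assms] pp_pos[OF assms] by simp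
qed

lemma force_eq:
  assumes "0 < a" "\<kappa> a < X"
  shows "force (p a * (X - \<kappa> a)) = a^2 * (1 - \<kappa> a * X) / (p a * (X - \<kappa> a)^3)"
proof -
  define Y where "Y = X - \<kappa> a"
  have "Y \<noteq> 0" "p a \<noteq> 0"
    using assms pp_pos[OF assms(1)] by (auto simp: Y_def)
  have "force (p a * Y) = a^2 * (p a)^2 * (1 - (\<kappa> a)^2) / (p a * Y)^3 - a^2 * p a * \<kappa> a * (1 / (p a * Y)^2)"
    by (simp only: pp_kappa_sq[OF assms(1)] pp_kappa[OF assms(1)])
  also have "\<dots> = a^2 * (1 - \<kappa> a * (Y + \<kappa> a)) / (p a * Y^3)"
    using \<open>Y \<noteq> 0\<close> \<open>p a \<noteq> 0\<close> by (simp add: field_simps power2_eq_square power3_eq_cube)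
  finally show ?thesis
    by (simp add: Y_def)
qed

lemma Vf_flow_deriv:
  assumes "0 < a"
  shows "((\<lambda>s. Vf m l (\<theta> + s * a) a) has_real_derivative force (Rf m l (\<theta> + t * a) a)) (at t)"
proof -
  define W where "W = sinh_anomaly (\<theta> + t * a) a"
  define X where "X = sqrt (1 + W^2)"
  define Y where "Y = X - \<kappa> a"
  have "\<kappa> a < X"
    unfolding X_def by (rule kappa_less_sqrt[OF assms])
  then have "Y \<noteq> 0" "p a \<noteq> 0"
    using pp_pos[OF assms] by (auto simp: Y_def)
  have "((\<lambda>s. a * sinh_anomaly (\<theta> + s * a) a / (sqrt (1 + (sinh_anomaly (\<theta> + s * a) a)^2) - \<kappa> a))
      has_real_derivative (a * (a * X / (p a * Y)) * Y - a * W * (a * W / (p a * Y) - 0)) / (Y * Y)) (at t)"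
    unfolding Y_def W_def X_def
    by (rule DERIV_divide[OF DERIV_cmult[where c = a, OF sinh_anomaly_flow_deriv[OF assms, of \<theta> t]]
        DERIV_diff[OF cosh_anomaly_flow_deriv[OF assms, of \<theta> t] DERIV_const[where k = "\<kappa> a"]]])
      (use \<open>\<kappa> a < X\<close> in \<open>simp add: X_def W_def\<close>)
  moreover have "(a * (a * X / (p a * Y)) * Y - a * W * (a * W / (p a * Y) - 0)) / (Y * Y)
      = a^2 * (X * Y - W^2) / (p a * Y^3)"
    using \<open>Y \<noteq> 0\<close> \<open>p a \<noteq> 0\<close> by (simp add: field_simps power2_eq_square power3_eq_cube)
  moreover have "X * Y - W^2 = 1 - \<kappa> a * X"
    by (simp add: X_def Y_def algebra_simps)
  ultimately show ?thesis
    using Rf_eq[OF assms] Vf_eq[OF assms] force_eq[OF assms \<open>\<kappa> a < X\<close>]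
    by (simp add: W_def X_def Y_def)
qed

lemma canon_map_deriv_theta:
  assumes "0 < a" "(canon_map m l has_derivative L) (at (\<theta>, a))"
  shows "L (1, 0) = (Vf m l \<theta> a / a, force (Rf m l \<theta> a) / a)"
proof -
  define V F where "V = Vf m l \<theta> a" and "F = force (Rf m l \<theta> a)"
  have "((\<lambda>s. (\<theta> + s * a, a)) has_derivative (\<lambda>h. (h * a, 0))) (at 0)"
    by (auto intro!: derivative_eq_intros)
  moreover have "(canon_map m l has_derivative L) (at (\<theta> + 0 * a, a))"
    using assms(2) by simp
  ultimately have "((\<lambda>s. canon_map m l (\<theta> + s * a, a)) has_derivative (\<lambda>h. L (h * a, 0))) (at 0)"
    by (rule has_derivative_compose)
  moreover have "((\<lambda>s. canon_map m l (\<theta> + s * a, a)) has_derivative (\<lambda>h. (h * V, h * F))) (at 0)"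
    using has_derivative_Pair[OF Rf_flow_deriv[OF assms(1), of \<theta> 0, unfolded has_field_derivative_def]
        Vf_flow_deriv[OF assms(1), of \<theta> 0, unfolded has_field_derivative_def]]
    by (simp add: canon_map_def V_def F_def mult.commute)
  ultimately have "(\<lambda>h. L (h * a, 0)) = (\<lambda>h. (h * V, h * F))"
    by (rule has_derivative_unique)
  then have "L (a, 0) = (V, F)"
    by (metis mult_1 mult_1_right)
  moreover have "L (a, 0) = a *\<^sub>R L (1, 0)"
    using linear_scale[OF has_derivative_linear[OF assms(2)], of a "(1, 0)"] by simp
  ultimately show ?thesis
    unfolding V_def[symmetric] F_def[symmetric] using assms(1) by (auto simp: prod_eq_iff field_simps)
qed

lemma canon_map_deriv_energy:
  assumes "0 < a" "(canon_map m l has_derivative L) (at (\<theta>, a))"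
  shows "Vf m l \<theta> a * snd (L (0, 1)) - force (Rf m l \<theta> a) * fst (L (0, 1)) = a"
proof -
  define R V F where "R = Rf m l \<theta> a" and "V = Vf m l \<theta> a" and "F = force R"
  let ?S = "UNIV \<times> {0<..} :: (real \<times> real) set"
  have "open ?S" "(\<theta>, a) \<in> ?S"
    using assms(1) by (auto intro: open_Times)
  have "0 < R"
    unfolding R_def using Rf_pos[OF assms(1)] .
  then have "((\<lambda>z. energy (fst z) (snd z)) has_derivative (\<lambda>h. - 2 * F * fst h + 2 * V * snd h))
      (at (R, V))"
    by (auto intro!: derivative_eq_intros simp: F_def field_simps power2_eq_square power3_eq_cube)
  moreover have "canon_map m l (\<theta>, a) = (R, V)"
    by (simp add: canon_map_def R_def V_def)
  ultimately have "((\<lambda>z. energy (fst (canon_map m l z)) (snd (canon_map m l z))) has_derivative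
      (\<lambda>h. - 2 * F * fst (L h) + 2 * V * snd (L h))) (at (\<theta>, a))"
    using has_derivative_compose[OF assms(2)] by (simp add: o_def)
  moreover have "((\<lambda>z. energy (fst (canon_map m l z)) (snd (canon_map m l z))) has_derivative
      (\<lambda>h. 2 * a * snd h)) (at (\<theta>, a))"
  proof (rule has_derivative_transform_within_open[OF _ \<open>open ?S\<close> \<open>(\<theta>, a) \<in> ?S\<close>])
    show "((\<lambda>z. (snd z)^2) has_derivative (\<lambda>h. 2 * a * snd h)) (at (\<theta>, a))"
      by (auto intro!: derivative_eq_intros)
    show "(snd z)^2 = energy (fst (canon_map m l z)) (snd (canon_map m l z))" if "z \<in> ?S" for z
      using that energy_canon_map by (auto simp: canon_map_def)
  qed
  ultimately have "(\<lambda>h. - 2 * F * fst (L h) + 2 * V * snd (L h)) = (\<lambda>h. 2 * a * snd h)"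
    by (rule has_derivative_unique)
  from fun_cong[OF this, of "(0, 1)"] have "2 * (V * snd (L (0, 1)) - F * fst (L (0, 1))) = 2 * a"
    by (simp add: algebra_simps)
  then show ?thesis
    unfolding R_def[symmetric] V_def[symmetric] F_def[symmetric] by simp
qed

lemma canon_map_jacobian_det:
  assumes "0 < a"
  shows "\<exists>L. (canon_map m l has_derivative L) (at (\<theta>, a)) \<and>
    fst (L (1, 0)) * snd (L (0, 1)) - fst (L (0, 1)) * snd (L (1, 0)) = 1"
proof -
  have "open (UNIV \<times> {0<..} :: (real \<times> real) set)" "(\<theta>, a) \<in> UNIV \<times> {0<..}"
    using assms by (auto intro: open_Times)
  then obtain L where L: "(canon_map m l has_derivative L) (at (\<theta>, a))"
    using Cinf_on_differentiable[OF Cinf_on_canon_map] by (meson differentiable_def)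
  define V F where "V = Vf m l \<theta> a" and "F = force (Rf m l \<theta> a)"
  have "fst (L (1, 0)) * snd (L (0, 1)) - fst (L (0, 1)) * snd (L (1, 0))
      = (V * snd (L (0, 1)) - F * fst (L (0, 1))) / a"
    using canon_map_deriv_theta[OF assms L, folded V_def F_def] by (simp add: diff_divide_distrib)
  also have "\<dots> = 1"
    using canon_map_deriv_energy[OF assms L, folded V_def F_def] assms by simp
  finally show ?thesis
    using L by blast
qed

lemma energy_flow_deriv:
  assumes "(r has_real_derivative v t) (at t)" "(v has_real_derivative force (r t)) (at t)" "r t \<noteq> 0"
  shows "((\<lambda>s. energy (r s) (v s)) has_real_derivative 0) (at t)"
  using assms by (auto intro!: derivative_eq_intros simp: field_simps power2_eq_square power3_eq_cube)

lemma Theta_flow_deriv: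
  assumes r': "(r has_real_derivative v t) (at t)" and v': "(v has_real_derivative force (r t)) (at t)"
    and "(r t, v t) \<in> Dl m l" and A: "Af m l (r t) (v t) = a"
  shows "((\<lambda>s. p a * psi (\<kappa> a) (v s * r s / (p a * a))) has_real_derivative a) (at t)"
proof -
  define w where "w s = v s * r s / (p a * a)" for s
  have "0 < r t" "0 < a"
    using assms(3) Af_pos[OF assms(3)] A by (auto simp: Dl_def)
  have "0 < p a"
    using pp_pos[OF \<open>0 < a\<close>] .
  have "(w has_real_derivative (force (r t) * r t + v t * v t) / (p a * a)) (at t)"
    unfolding w_def by (intro DERIV_cdivide DERIV_mult v' r')
  then have "((\<lambda>s. p a * psi (\<kappa> a) (w s)) has_real_derivative
      p a * ((1 - \<kappa> a / sqrt ((w t)^2 + 1)) * ((force (r t) * r t + v t * v t) / (p a * a)))) (at t)"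
    by (rule DERIV_cmult[OF DERIV_chain2[OF psi_has_real_derivative]])
  moreover have "sqrt ((w t)^2 + 1) = r t / p a + \<kappa> a"
    using Dl_cosh_anomaly[OF assms(3)] A by (simp add: w_def add.commute)
  moreover have "force (r t) * r t + v t * v t = a^2 + (m / 2) / r t"
  proof -
    have vv: "v t * v t = a^2 + m / r t - l / (r t)^2"
      using A assms(3) by (auto simp: Af_def Dl_def power2_eq_square[symmetric])
    show ?thesis
      unfolding vv using \<open>0 < r t\<close> by (simp add: field_simps power2_eq_square power3_eq_cube)
  qed
  moreover have "p a * ((1 - \<kappa> a / (r t / p a + \<kappa> a)) * ((a^2 + (m / 2) / r t) / (p a * a))) = a"
  proof -
    have "0 < r t + \<kappa> a * p a"
      using \<open>0 < r t\<close> \<open>0 < p a\<close> kappa_pos[of a] by (simp add: add_pos_pos)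
    then have "1 - \<kappa> a / (r t / p a + \<kappa> a) = r t / (r t + \<kappa> a * p a)"
      using \<open>0 < p a\<close> by (simp add: field_simps)
    moreover have "(a^2 + (m / 2) / r t) / (p a * a) = a * (r t + \<kappa> a * p a) / (r t * p a)"
      unfolding pp_kappa[OF \<open>0 < a\<close>, symmetric]
      using \<open>0 < r t\<close> \<open>0 < p a\<close> \<open>0 < a\<close> by (simp add: field_simps power2_eq_square)
    ultimately show ?thesis
      using \<open>0 < r t + \<kappa> a * p a\<close> \<open>0 < r t\<close> \<open>0 < p a\<close> by simp
  qed
  ultimately have "((\<lambda>s. p a * psi (\<kappa> a) (w s)) has_real_derivative a) (at t)"
    by (simp only:)
  then show ?thesis
    unfolding w_def .
qed

lemma ode_solution_eq_flow:
  fixes I :: "real set" and r v :: "real \<Rightarrow> real"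
  assumes "is_interval I"
    and r': "\<And>t. t \<in> I \<Longrightarrow> (r has_real_derivative v t) (at t)"
    and v': "\<And>t. t \<in> I \<Longrightarrow> (v has_real_derivative force (r t)) (at t)"
    and in_Dl: "\<And>t. t \<in> I \<Longrightarrow> (r t, v t) \<in> Dl m l"
  shows "\<exists>\<theta> a. 0 < a \<and> (\<forall>t\<in>I. (r t, v t) = canon_map m l (\<theta> + t * a, a))"
proof (cases "I = {}")
  case False
  then obtain t0 where "t0 \<in> I"
    by blast
  have "\<exists>c. \<forall>t\<in>I. Af m l (r t) (v t) = c"
    unfolding Af_def using zero_deriv_imp_const_on_interval[OF assms(1) energy_flow_deriv[OF r' v']] in_Dl
    by (force simp: Dl_def)
  then obtain a where A: "\<And>t. t \<in> I \<Longrightarrow> Af m l (r t) (v t) = a"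
    by blast
  have "0 < a"
    using Af_pos[OF in_Dl[OF \<open>t0 \<in> I\<close>]] A[OF \<open>t0 \<in> I\<close>] by simp
  define \<theta> where "\<theta> s = p a * psi (\<kappa> a) (v s * r s / (p a * a))" for s
  have \<theta>': "(\<theta> has_real_derivative a) (at t)" if "t \<in> I" for t
    unfolding \<theta>_def using Theta_flow_deriv[OF r'[OF that] v'[OF that] in_Dl[OF that] A[OF that]] .
  have "\<exists>\<theta>0. \<forall>t\<in>I. \<theta> t - t * a = \<theta>0"
    by (rule zero_deriv_imp_const_on_interval[OF assms(1)]) (auto intro!: derivative_eq_intros \<theta>')
  then obtain \<theta>0 where \<theta>0: "\<And>t. t \<in> I \<Longrightarrow> \<theta> t - t * a = \<theta>0"
    by blast
  have "(r t, v t) = canon_map m l (\<theta>0 + t * a, a)" if "t \<in> I" for t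
  proof -
    have "canon_inv m l (r t, v t) = (\<theta> t, a)"
      using Theta_eq[OF in_Dl[OF that]] A[OF that] by (simp add: canon_inv_def \<theta>_def)
    then show ?thesis
      using canon_map_canon_inv[OF in_Dl[OF that]] \<theta>0[OF that] by (simp add: algebra_simps)
  qed
  with \<open>0 < a\<close> show ?thesis
    by blast
qed (auto intro!: exI[of _ 0] exI[of _ 1])

end

theorem proposition2p6:
  fixes m l :: real
  assumes "m > 0" and "l > 0"
  shows "bij_betw (canon_map m l) (UNIV \<times> {0<..}) (Dl m l)
    \<and> (\<forall>x\<in>UNIV \<times> {0<..}. canon_inv m l (canon_map m l x) = x)
    \<and> (\<forall>z\<in>Dl m l. canon_inv m l z \<in> UNIV \<times> {0<..} \<and> canon_map m l (canon_inv m l z) = z)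
    \<and> Cinf_on (UNIV \<times> {0<..}) (canon_map m l)
    \<and> Cinf_on (Dl m l) (canon_inv m l)
    \<and> (\<forall>x\<in>UNIV \<times> {0<..}. \<exists>L. (canon_map m l has_derivative L) (at x) \<and>
          fst (L (1, 0)) * snd (L (0, 1)) - fst (L (0, 1)) * snd (L (1, 0)) = 1)
    \<and> (\<forall>(I :: real set) (r :: real \<Rightarrow> real) (v :: real \<Rightarrow> real).
          open I \<and> is_interval I \<and>
          (\<forall>t\<in>I. (r has_real_derivative v t) (at t) \<and>
                  (v has_real_derivative (l / (r t)^3 - m / 2 * (1 / (r t)^2))) (at t) \<and>
                  (r t, v t) \<in> Dl m l)
          \<longrightarrow> (\<exists>\<theta> a. a > 0 \<and> (\<forall>t\<in>I. (r t, v t) = canon_map m l (\<theta> + t * a, a))))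
    \<and> (\<forall>\<theta> a. a > 0 \<longrightarrow>
          (\<forall>t. ((\<lambda>s. fst (canon_map m l (\<theta> + s * a, a))) has_real_derivative
                   snd (canon_map m l (\<theta> + t * a, a))) (at t) \<and>
               ((\<lambda>s. snd (canon_map m l (\<theta> + s * a, a))) has_real_derivative
                   (l / (fst (canon_map m l (\<theta> + t * a, a)))^3
                    - m / 2 * (1 / (fst (canon_map m l (\<theta> + t * a, a)))^2))) (at t) \<and>
               canon_map m l (\<theta> + t * a, a) \<in> Dl m l))"
proof -
  interpret radial_kepler m l
    using assms by unfold_locales
  show ?thesis
    apply (intro conjI ballI allI impI bij_betw_canon_map Cinf_on_canon_map Cinf_on_canon_inv)
    subgoal for x using canon_inv_canon_map by auto
    subgoal for z by (rule canon_inv_in_domain)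
    subgoal for z by (rule canon_map_canon_inv)
    subgoal for x using canon_map_jacobian_det by auto
    subgoal for I r v by (rule ode_solution_eq_flow) auto
    subgoal for \<theta> a t using Rf_flow_deriv by (simp add: canon_map_def)
    subgoal for \<theta> a t using Vf_flow_deriv by (simp add: canon_map_def)
    subgoal for \<theta> a t by (rule canon_map_in_Dl)
    done
qed

end
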